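(* Let $n_u<n$ be positive integers, $n_b=n-n_u$, $\mathbf{A}\in\mathbb{R}^{n_u\times n_b}$, and $\mathbf{C}=[\mathbf{I}_{n_u}\;\; -\mathbf{A}]\in\mathbb{R}^{n_u\times n}$. Let $p\ge 2$ experts be given; for $j=1,\dots,p$ let $1\le n_j\le n$ and let $\mathbf{L}_j\in\{0,1\}^{n_j\times n}$ be a selection matrix (its rows are distinct rows of $\mathbf{I}_n$), and assume every $i\in\{1,\dots,n\}$ is selected by at least one $\mathbf{L}_j$. Let $m=\sum_{j=1}^p n_j$, $\mathbf{K}=[\mathbf{L}_1^\top\;\cdots\;\mathbf{L}_p^\top]^\top\in\{0,1\}^{m\times n}$, let $\widehat{\mathbf{y}}=[\widehat{\mathbf{y}}^{1\top}\cdots\widehat{\mathbf{y}}^{p\top}]^\top\in\mathbb{R}^m$ with $\widehat{\mathbf{y}}^j\in\mathbb{R}^{n_j}$, and let $\mathbf{W}\in\mathbb{R}^{m\times m}$ be symmetric positive definite. Then the solution of the linearly constrained quadratic program $$\widetilde{\mathbf{y}}^c=\arg\min_{\mathbf{y}\in\mathbb{R}^n}(\widehat{\mathbf{y}}-\mathbf{K}\mathbf{y})^\top\mathbf{W}^{-1}(\widehat{\mathbf{y}}-\mathbf{K}\mathbf{y})\quad\text{s.t. }\mathbf{C}\mathbf{y}=\mathbf{0}_{(n_u\times 1)}$$ is given by $\widetilde{\mathbf{y}}^c=\boldsymbol{\Psi}^\top\widehat{\mathbf{y}}=\mathbf{M}\boldsymbol{\Omega}^\top\widehat{\mathbf{y}}$,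 where $\mathbf{W}_c=(\mathbf{K}^\top\mathbf{W}^{-1}\mathbf{K})^{-1}$, $\boldsymbol{\Omega}=\mathbf{W}^{-1}\mathbf{K}\mathbf{W}_c$, $\mathbf{M}=\mathbf{I}_n-\mathbf{W}_c\mathbf{C}^\top(\mathbf{C}\mathbf{W}_c\mathbf{C}^\top)^{-1}\mathbf{C}$, and $\boldsymbol{\Psi}^\top=\mathbf{M}\boldsymbol{\Omega}^\top\in\mathbb{R}^{n\times m}$.
   Context: Setting: a linearly constrained multiple time series whose target forecast vector $\mathbf{y}\in\mathbb{R}^n$ must satisfy $\mathbf{C}\mathbf{y}=\mathbf{0}$ (coherence). Expert $j$ provides base forecasts $\widehat{\mathbf{y}}^j$ of the subvector $\mathbf{L}_j\mathbf{y}$; these are stacked "by expert" into $\widehat{\mathbf{y}}$, and $\mathbf{W}$ plays the role of the covariance matrix of the base forecast errors $\widehat{\mathbf{y}}-\mathbf{K}\mathbf{y}$. $\widetilde{\mathbf{y}}^c$ is called the optimal (minimum mean square error) linear coherent combined forecast. *)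

theory Defs
  imports "Jordan_Normal_Form.Matrix"
begin

definition mat_inv :: "real mat \<Rightarrow> real mat" where
  "mat_inv A = (SOME B. inverts_mat A B \<and> inverts_mat B A)"

definition selection_mat :: "real mat \<Rightarrow> nat \<Rightarrow> nat \<Rightarrow> bool" where
  "selection_mat L nj n \<longleftrightarrow> L \<in> carrier_mat nj n \<and>
     (\<forall>r<nj. \<exists>i<n. row L r = unit_vec n i) \<and>
     (\<forall>r<nj. \<forall>r'<nj. r \<noteq> r' \<longrightarrow> row L r \<noteq> row L r')"

definition stack_rows :: "nat \<Rightarrow> real mat list \<Rightarrow> real mat" where
  "stack_rows n Ls = foldr (\<lambda>A B. A @\<^sub>r B) Ls (0\<^sub>m 0 n)"

(* C = [I_nu  -A], with A of size nu x nb *)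
definition coherence_mat :: "nat \<Rightarrow> nat \<Rightarrow> real mat \<Rightarrow> real mat" where
  "coherence_mat nu nb A = mat nu (nu + nb)
     (\<lambda>(i,k). if k < nu then (if i = k then 1 else 0) else - A $$ (i, k - nu))"

definition sym_pos_def :: "real mat \<Rightarrow> nat \<Rightarrow> bool" where
  "sym_pos_def W m \<longleftrightarrow> W \<in> carrier_mat m m \<and> transpose_mat W = W \<and>
     (\<forall>x\<in>carrier_vec m. x \<noteq> 0\<^sub>v m \<longrightarrow> x \<bullet> (W *\<^sub>v x) > 0)"

definition gls_obj :: "real mat \<Rightarrow> real mat \<Rightarrow> real vec \<Rightarrow> real vec \<Rightarrow> real" where
  "gls_obj W K yhat y = (yhat - K *\<^sub>v y) \<bullet> (mat_inv W *\<^sub>v (yhat - K *\<^sub>v y))"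

end

theory Submission
  imports Defs "Jordan_Normal_Form.Determinant"
begin

text \<open>
  Write Wi for the inverse of W, so the objective is the Wi-norm of the residual yhat - K y.
  Every coordinate is observed by some expert, so K is injective and K^T Wi K is positive
  definite; C = [I -A] has full row rank, so C Wc C^T is positive definite too. The
  candidate yc satisfies the Lagrange conditions C yc = 0 and K^T Wi (yhat - K yc) = C^T \<mu>,
  which make the residual at yc Wi-orthogonal to K d for every d in the kernel of C. By
  Pythagoras, the objective at a coherent y is the objective at yc plus the Wi-norm of
  K (y - yc), and this is positive unless y = yc.
\<close>

lemma assoc_mult_mat_vec_dim:
  "dim_col A = dim_row B \<Longrightarrow> dim_col B = dim_vec v \<Longrightarrow> (A * B) *\<^sub>v v = A *\<^sub>v (B *\<^sub>v v)"
  by (rule assoc_mult_mat_vec[of A "dim_row A" "dim_col A" B "dim_col B" v]) auto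

lemma invertible_mat_inv:
  assumes A: "A \<in> carrier_mat n n" and "invertible_mat A"
  shows mat_inv_carrier: "mat_inv A \<in> carrier_mat n n"
    and mat_inv_right: "A * mat_inv A = 1\<^sub>m n"
    and mat_inv_left: "mat_inv A * A = 1\<^sub>m n"
proof -
  have "inverts_mat A (mat_inv A) \<and> inverts_mat (mat_inv A) A"
    unfolding mat_inv_def by (rule someI_ex) (use assms in \<open>auto simp: invertible_mat_def\<close>)
  then have AB: "A * mat_inv A = 1\<^sub>m n" and BA: "mat_inv A * A = 1\<^sub>m (dim_row (mat_inv A))"
    using A by (auto simp: inverts_mat_def)
  have "dim_row (mat_inv A) = n"
    using arg_cong[OF BA, of dim_col] A by simp
  moreover have "dim_col (mat_inv A) = n"
    using arg_cong[OF AB, of dim_col] by simp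
  ultimately show "mat_inv A \<in> carrier_mat n n" and "A * mat_inv A = 1\<^sub>m n" and "mat_inv A * A = 1\<^sub>m n"
    using AB BA by auto
qed

lemma invertible_mat_if_det_nonzero:
  fixes A :: "'a :: field mat"
  assumes A: "A \<in> carrier_mat n n" and "det A \<noteq> 0"
  shows "invertible_mat A"
proof -
  obtain B where "B \<in> carrier_mat n n" "B * A = 1\<^sub>m n" "A * B = 1\<^sub>m n"
    using det_non_zero_imp_unit[OF assms, of "()"] by (auto simp: Units_def ring_mat_simps)
  then show ?thesis
    using A unfolding invertible_mat_def inverts_mat_def by auto
qed

lemma sym_pos_def_invertible:
  assumes "sym_pos_def A n"
  shows "invertible_mat A"
proof (rule invertible_mat_if_det_nonzero)
  show A: "A \<in> carrier_mat n n"
    using assms by (simp add: sym_pos_def_def)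
  show "det A \<noteq> 0"
  proof
    assume "det A = 0"
    then obtain v where "v \<in> carrier_vec n" "v \<noteq> 0\<^sub>v n" "A *\<^sub>v v = 0\<^sub>v n"
      using det_0_iff_vec_prod_zero[OF A] by auto
    with assms show False
      by (fastforce simp: sym_pos_def_def)
  qed
qed

lemma sym_pos_def_nonneg:
  assumes "sym_pos_def A n" and "x \<in> carrier_vec n"
  shows "0 \<le> x \<bullet> (A *\<^sub>v x)"
  using assms by (cases "x = 0\<^sub>v n") (auto simp: sym_pos_def_def intro: less_imp_le)

lemma sym_pos_def_mat_inv:
  assumes "sym_pos_def A n"
  shows "sym_pos_def (mat_inv A) n"
proof -
  have A: "A \<in> carrier_mat n n" and sym: "A\<^sup>T = A"
    and pos: "\<And>x. x \<in> carrier_vec n \<Longrightarrow> x \<noteq> 0\<^sub>v n \<Longrightarrow> 0 < x \<bullet> (A *\<^sub>v x)"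
    using assms by (auto simp: sym_pos_def_def)
  define B where "B = mat_inv A"
  have B: "B \<in> carrier_mat n n" and AB: "A * B = 1\<^sub>m n" and BA: "B * A = 1\<^sub>m n"
    using invertible_mat_inv[OF A sym_pos_def_invertible[OF assms]] by (simp_all add: B_def)
  have "B\<^sup>T = (B * A) * B\<^sup>T"
    using B BA by simp
  also have "\<dots> = B * (B * A)\<^sup>T"
    using A B sym by (simp add: transpose_mult[OF B A])
  finally have sym_B: "B\<^sup>T = B"
    using B BA by simp
  have "0 < x \<bullet> (B *\<^sub>v x)" if x: "x \<in> carrier_vec n" "x \<noteq> 0\<^sub>v n" for x
  proof -
    define y where "y = B *\<^sub>v x"
    have y: "y \<in> carrier_vec n"
      using B x by (simp add: y_def)
    have Ay: "A *\<^sub>v y = x"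
      using A B x AB by (simp flip: assoc_mult_mat_vec add: y_def)
    then have "y \<noteq> 0\<^sub>v n"
      using A x by auto
    then have "0 < y \<bullet> (A *\<^sub>v y)"
      using pos y by blast
    also have "y \<bullet> (A *\<^sub>v y) = x \<bullet> (B *\<^sub>v x)"
      using transpose_vec_mult_scalar[OF A y y] sym Ay comm_scalar_prod[OF y x(1)]
      by (simp add: y_def)
    finally show ?thesis .
  qed
  then show ?thesis
    using B sym_B by (simp add: sym_pos_def_def B_def)
qed

lemma sym_pos_def_congruence:
  assumes W: "sym_pos_def W m" and B: "B \<in> carrier_mat m n"
    and inj: "\<And>x. x \<in> carrier_vec n \<Longrightarrow> B *\<^sub>v x = 0\<^sub>v m \<Longrightarrow> x = 0\<^sub>v n"
  shows "sym_pos_def (B\<^sup>T * W * B) n"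
proof -
  have W_carrier: "W \<in> carrier_mat m m" and sym: "W\<^sup>T = W"
    using W by (auto simp: sym_pos_def_def)
  have "(B\<^sup>T * W * B)\<^sup>T = B\<^sup>T * W * B"
    using B W_carrier sym by (simp add: transpose_mult[of _ n m _ n] transpose_mult[of _ m m _ n])
  moreover have "0 < x \<bullet> ((B\<^sup>T * W * B) *\<^sub>v x)" if x: "x \<in> carrier_vec n" "x \<noteq> 0\<^sub>v n" for x
  proof -
    have Bx: "B *\<^sub>v x \<in> carrier_vec m" "B *\<^sub>v x \<noteq> 0\<^sub>v m"
      using B x inj by auto
    then have "0 < (B *\<^sub>v x) \<bullet> (W *\<^sub>v (B *\<^sub>v x))"
      using W by (auto simp: sym_pos_def_def)
    also have "\<dots> = x \<bullet> ((B\<^sup>T * W * B) *\<^sub>v x)"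
      using transpose_vec_mult_scalar[OF B x(1), of "W *\<^sub>v (B *\<^sub>v x)"] B W_carrier x
        comm_scalar_prod[of x n] comm_scalar_prod[OF Bx(1), of "W *\<^sub>v (B *\<^sub>v x)"]
      by (simp add: assoc_mult_mat_vec_dim)
    finally show ?thesis .
  qed
  ultimately show ?thesis
    using B W_carrier by (simp add: sym_pos_def_def)
qed

lemma stack_rows_Nil [simp]: "stack_rows n [] = 0\<^sub>m 0 n"
  and stack_rows_Cons [simp]: "stack_rows n (L # Ls) = L @\<^sub>r stack_rows n Ls"
  by (simp_all add: stack_rows_def)

lemma stack_rows_carrier:
  assumes "length ns = length Ls" and "\<forall>j<length Ls. Ls ! j \<in> carrier_mat (ns ! j) n"
  shows "stack_rows n Ls \<in> carrier_mat (sum_list ns) n"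
  using assms
proof (induction Ls arbitrary: ns)
  case (Cons L Ls)
  then obtain k ks where ns: "ns = k # ks"
    by (cases ns) auto
  have "L \<in> carrier_mat k n" and "\<forall>j<length Ls. Ls ! j \<in> carrier_mat (ks ! j) n"
    using Cons.prems(2) ns by force+
  with Cons.IH[of ks] Cons.prems(1) ns show ?case
    by auto
qed simp

lemma stack_rows_mult_vec_eq_0D:
  assumes "length ns = length Ls" and "\<forall>j<length Ls. Ls ! j \<in> carrier_mat (ns ! j) n"
    and y: "y \<in> carrier_vec n" and "stack_rows n Ls *\<^sub>v y = 0\<^sub>v (sum_list ns)"
    and "j < length Ls"
  shows "Ls ! j *\<^sub>v y = 0\<^sub>v (ns ! j)"
  using assms(1,2,4,5)
proof (induction Ls arbitrary: ns j)
  case (Cons L Ls)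
  then obtain k ks where ns: "ns = k # ks"
    by (cases ns) auto
  have L: "L \<in> carrier_mat k n" and Ls: "\<forall>j<length Ls. Ls ! j \<in> carrier_mat (ks ! j) n"
    using Cons.prems(2) ns by force+
  have "0\<^sub>v (k + sum_list ks) = 0\<^sub>v k @\<^sub>v (0\<^sub>v (sum_list ks) :: real vec)"
    by (intro eq_vecI) auto
  then have "(L *\<^sub>v y) @\<^sub>v (stack_rows n Ls *\<^sub>v y) = 0\<^sub>v k @\<^sub>v 0\<^sub>v (sum_list ks)"
    using Cons.prems(3) ns mat_mult_append[OF L stack_rows_carrier[OF _ Ls] y] Cons.prems(1) by simp
  then have "L *\<^sub>v y = 0\<^sub>v k \<and> stack_rows n Ls *\<^sub>v y = 0\<^sub>v (sum_list ks)"
    using append_vec_eq[of "L *\<^sub>v y" k "0\<^sub>v k"] L y by simp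
  then show ?case
  proof (cases j)
    case (Suc j')
    then show ?thesis
      using Cons.IH[OF _ Ls, of j'] Cons.prems(1,4) ns \<open>_ \<and> _\<close> by simp
  qed (simp add: ns)
qed simp

lemma stack_rows_kernel_trivial:
  assumes "length ns = length Ls" and blocks: "\<forall>j<length Ls. Ls ! j \<in> carrier_mat (ns ! j) n"
    and cover: "\<forall>i<n. \<exists>j<length Ls. \<exists>r<ns ! j. row (Ls ! j) r = unit_vec n i"
    and y: "y \<in> carrier_vec n" and "stack_rows n Ls *\<^sub>v y = 0\<^sub>v (sum_list ns)"
  shows "y = 0\<^sub>v n"
proof (rule eq_vecI)
  fix i
  assume "i < dim_vec (0\<^sub>v n :: real vec)"
  then have i: "i < n"
    by simp
  then obtain j r where j: "j < length Ls" and r: "r < ns ! j" and "row (Ls ! j) r = unit_vec n i"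
    using cover by blast
  then have "(Ls ! j *\<^sub>v y) $ r = unit_vec n i \<bullet> y"
    using blocks j r by (metis carrier_matD(1) index_mult_mat_vec)
  also have "\<dots> = y $ i"
    using y i by (rule scalar_prod_left_unit)
  finally have "(Ls ! j *\<^sub>v y) $ r = y $ i" .
  moreover have "Ls ! j *\<^sub>v y = 0\<^sub>v (ns ! j)"
    using stack_rows_mult_vec_eq_0D[OF assms(1,2) y] assms(5) j by blast
  ultimately show "y $ i = 0\<^sub>v n $ i"
    using i r by simp
qed (use y in simp)

lemma coherence_mat_carrier: "coherence_mat nu nb A \<in> carrier_mat nu (nu + nb)"
  by (simp add: coherence_mat_def)

lemma coherence_mat_transpose_kernel_trivial:
  assumes z: "z \<in> carrier_vec nu" and "(coherence_mat nu nb A)\<^sup>T *\<^sub>v z = 0\<^sub>v (nu + nb)"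
  shows "z = 0\<^sub>v nu"
proof (rule eq_vecI)
  fix k
  assume "k < dim_vec (0\<^sub>v nu :: real vec)"
  then have k: "k < nu"
    by simp
  have "col (coherence_mat nu nb A) k = unit_vec nu k"
    using k by (intro eq_vecI) (auto simp: coherence_mat_def)
  then have "((coherence_mat nu nb A)\<^sup>T *\<^sub>v z) $ k = z $ k"
    using k z by (simp add: coherence_mat_def)
  then show "z $ k = 0\<^sub>v nu $ k"
    using assms(2) k by simp
qed (use z in simp)

lemma quadratic_form_diff_orthogonal:
  fixes W :: "'a :: comm_ring mat"
  assumes W: "W \<in> carrier_mat m m" and sym: "W\<^sup>T = W"
    and r: "r \<in> carrier_vec m" and v: "v \<in> carrier_vec m" and orth: "v \<bullet> (W *\<^sub>v r) = 0"
  shows "(r - v) \<bullet> (W *\<^sub>v (r - v)) = r \<bullet> (W *\<^sub>v r) + v \<bullet> (W *\<^sub>v v)"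
proof -
  have "r \<bullet> (W *\<^sub>v v) = v \<bullet> (W *\<^sub>v r)"
    using transpose_vec_mult_scalar[OF W v r] sym comm_scalar_prod[of "W *\<^sub>v r" m v] W r v
    by simp
  then have "r \<bullet> (W *\<^sub>v v) = 0"
    using orth by simp
  moreover have "(r - v) \<bullet> (W *\<^sub>v (r - v))
      = r \<bullet> (W *\<^sub>v r) - r \<bullet> (W *\<^sub>v v) - (v \<bullet> (W *\<^sub>v r) - v \<bullet> (W *\<^sub>v v))"
    using W r v
    by (simp add: mult_minus_distrib_mat_vec minus_scalar_prod_distrib[of _ m]
        scalar_prod_minus_distrib[of _ m])
  ultimately show ?thesis
    using orth by simp
qed

lemma gls_lagrange_conditions:
  fixes K Wi Wc C Si :: "'a :: comm_ring_1 mat"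
  assumes K: "K \<in> carrier_mat m n" and Wi: "Wi \<in> carrier_mat m m" and Wc: "Wc \<in> carrier_mat n n"
    and Wc_inv: "K\<^sup>T * Wi * K * Wc = 1\<^sub>m n"
    and C: "C \<in> carrier_mat nu n" and Si: "Si \<in> carrier_mat nu nu"
    and Si_inv: "C * Wc * C\<^sup>T * Si = 1\<^sub>m nu"
    and yhat: "yhat \<in> carrier_vec m"
  defines "yc \<equiv> (1\<^sub>m n - Wc * C\<^sup>T * Si * C) *\<^sub>v ((Wc * K\<^sup>T * Wi) *\<^sub>v yhat)"
  shows "C *\<^sub>v yc = 0\<^sub>v nu" and "\<exists>\<mu>\<in>carrier_vec nu. K\<^sup>T *\<^sub>v (Wi *\<^sub>v (yhat - K *\<^sub>v yc)) = C\<^sup>T *\<^sub>v \<mu>"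
proof -
  have [simp]: "dim_row K = m" "dim_col K = n" "dim_row Wi = m" "dim_col Wi = m"
    "dim_row Wc = n" "dim_col Wc = n" "dim_row C = nu" "dim_col C = n"
    "dim_row Si = nu" "dim_col Si = nu" "dim_vec yhat = m"
    using K Wi Wc C Si yhat by auto
  define a where "a = K\<^sup>T *\<^sub>v (Wi *\<^sub>v yhat)"
  define \<mu> where "\<mu> = Si *\<^sub>v (C *\<^sub>v (Wc *\<^sub>v a))"
  define b where "b = C\<^sup>T *\<^sub>v \<mu>"
  have a: "a \<in> carrier_vec n" and \<mu>: "\<mu> \<in> carrier_vec nu" and b: "b \<in> carrier_vec n"
    by (auto simp: a_def \<mu>_def b_def intro!: carrier_vecI)
  have Wc_a: "Wc *\<^sub>v a \<in> carrier_vec n" and Wc_b: "Wc *\<^sub>v b \<in> carrier_vec n"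
    using Wc a b by simp_all
  have "(Wc * K\<^sup>T * Wi) *\<^sub>v yhat = Wc *\<^sub>v a"
    by (simp add: a_def assoc_mult_mat_vec_dim)
  moreover have "Wc * C\<^sup>T * Si * C \<in> carrier_mat n n"
    by (intro carrier_matI) simp_all
  ultimately have yc: "yc = Wc *\<^sub>v a - Wc *\<^sub>v b"
    unfolding yc_def using minus_mult_distrib_mat_vec[OF one_carrier_mat _ Wc_a] Wc_a
    by (simp add: b_def \<mu>_def assoc_mult_mat_vec_dim)
  then have yc_carrier: "yc \<in> carrier_vec n"
    using Wc_a Wc_b by simp
  have "C *\<^sub>v (Wc *\<^sub>v b) = (C * Wc * C\<^sup>T * Si) *\<^sub>v (C *\<^sub>v (Wc *\<^sub>v a))"
    using a by (simp add: b_def \<mu>_def assoc_mult_mat_vec_dim)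
  also have "\<dots> = C *\<^sub>v (Wc *\<^sub>v a)"
    using C Wc_a by (simp add: Si_inv)
  finally show "C *\<^sub>v yc = 0\<^sub>v nu"
    unfolding yc mult_minus_distrib_mat_vec[OF C Wc_a Wc_b] by (auto intro!: eq_vecI)
  define Q where "Q = K\<^sup>T * Wi * K"
  have Q: "Q \<in> carrier_mat n n"
    unfolding Q_def by (intro carrier_matI) simp_all
  have Q_Wc: "Q *\<^sub>v (Wc *\<^sub>v v) = v" if "v \<in> carrier_vec n" for v
    using assoc_mult_mat_vec[OF Q Wc that] Wc_inv that by (simp add: Q_def)
  have "K\<^sup>T *\<^sub>v (Wi *\<^sub>v (K *\<^sub>v yc)) = Q *\<^sub>v yc"
    using yc_carrier by (simp add: Q_def assoc_mult_mat_vec_dim)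
  also have "\<dots> = a - b"
    unfolding yc mult_minus_distrib_mat_vec[OF Q Wc_a Wc_b] using Q_Wc a b by simp
  finally have "K\<^sup>T *\<^sub>v (Wi *\<^sub>v (K *\<^sub>v yc)) = a - b" .
  moreover have "K\<^sup>T *\<^sub>v (Wi *\<^sub>v (yhat - K *\<^sub>v yc)) = a - K\<^sup>T *\<^sub>v (Wi *\<^sub>v (K *\<^sub>v yc))"
    using K Wi yhat yc_carrier
    by (simp add: a_def mult_minus_distrib_mat_vec[of Wi m m] mult_minus_distrib_mat_vec[of "K\<^sup>T" n m])
  ultimately have "K\<^sup>T *\<^sub>v (Wi *\<^sub>v (yhat - K *\<^sub>v yc)) = C\<^sup>T *\<^sub>v \<mu>"
    using a b by (auto simp: b_def intro!: eq_vecI)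
  with \<mu> show "\<exists>\<mu>\<in>carrier_vec nu. K\<^sup>T *\<^sub>v (Wi *\<^sub>v (yhat - K *\<^sub>v yc)) = C\<^sup>T *\<^sub>v \<mu>"
    by blast
qed

lemma gls_obj_decomposition:
  assumes W: "sym_pos_def W m" and K: "K \<in> carrier_mat m n" and C: "C \<in> carrier_mat nu n"
    and yhat: "yhat \<in> carrier_vec m"
    and yc: "yc \<in> carrier_vec n" "C *\<^sub>v yc = 0\<^sub>v nu"
    and y: "y \<in> carrier_vec n" "C *\<^sub>v y = 0\<^sub>v nu"
    and \<mu>: "\<mu> \<in> carrier_vec nu"
    and lagrange: "K\<^sup>T *\<^sub>v (mat_inv W *\<^sub>v (yhat - K *\<^sub>v yc)) = C\<^sup>T *\<^sub>v \<mu>"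
  shows "gls_obj W K yhat y
    = gls_obj W K yhat yc + (K *\<^sub>v (y - yc)) \<bullet> (mat_inv W *\<^sub>v (K *\<^sub>v (y - yc)))"
proof -
  define Wi where "Wi = mat_inv W"
  define r where "r = yhat - K *\<^sub>v yc"
  define d where "d = y - yc"
  have Wi: "Wi \<in> carrier_mat m m" "Wi\<^sup>T = Wi"
    using sym_pos_def_mat_inv[OF W] by (auto simp: Wi_def sym_pos_def_def)
  have r: "r \<in> carrier_vec m" and d: "d \<in> carrier_vec n" and Kd: "K *\<^sub>v d \<in> carrier_vec m"
    using K yhat yc y by (auto simp: r_def d_def)
  have Cd: "C *\<^sub>v d = 0\<^sub>v nu"
    using mult_minus_distrib_mat_vec[OF C y(1) yc(1)] y yc by (simp add: d_def)
  have "(K *\<^sub>v d) \<bullet> (Wi *\<^sub>v r) = d \<bullet> (K\<^sup>T *\<^sub>v (Wi *\<^sub>v r))"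
    using transpose_vec_mult_scalar[OF K d, of "Wi *\<^sub>v r"] Wi r d Kd
      comm_scalar_prod[OF Kd, of "Wi *\<^sub>v r"] comm_scalar_prod[OF d, of "K\<^sup>T *\<^sub>v (Wi *\<^sub>v r)"] K
    by simp
  also have "\<dots> = (C *\<^sub>v d) \<bullet> \<mu>"
    using lagrange transpose_vec_mult_scalar[OF C d \<mu>] comm_scalar_prod[OF d, of "C\<^sup>T *\<^sub>v \<mu>"]
      comm_scalar_prod[OF \<mu>, of "C *\<^sub>v d"] C d \<mu>
    by (simp add: Wi_def r_def)
  also have "\<dots> = 0"
    using Cd \<mu> by simp
  finally have orth: "(K *\<^sub>v d) \<bullet> (Wi *\<^sub>v r) = 0" .
  have "yhat - K *\<^sub>v y = r - K *\<^sub>v d"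
    using mult_minus_distrib_mat_vec[OF K y(1) yc(1)] K yhat y yc
    by (auto simp: r_def d_def intro!: eq_vecI)
  then show ?thesis
    using quadratic_form_diff_orthogonal[OF Wi r Kd orth]
    unfolding gls_obj_def Wi_def r_def d_def by simp
qed

lemma gls_lagrange_unique_minimizer:
  assumes W: "sym_pos_def W m" and K: "K \<in> carrier_mat m n"
    and K_inj: "\<And>y. y \<in> carrier_vec n \<Longrightarrow> K *\<^sub>v y = 0\<^sub>v m \<Longrightarrow> y = 0\<^sub>v n"
    and C: "C \<in> carrier_mat nu n" and yhat: "yhat \<in> carrier_vec m"
    and yc: "yc \<in> carrier_vec n" "C *\<^sub>v yc = 0\<^sub>v nu"
    and \<mu>: "\<mu> \<in> carrier_vec nu"
    and lagrange: "K\<^sup>T *\<^sub>v (mat_inv W *\<^sub>v (yhat - K *\<^sub>v yc)) = C\<^sup>T *\<^sub>v \<mu>"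
  shows "\<forall>y\<in>carrier_vec n. C *\<^sub>v y = 0\<^sub>v nu \<longrightarrow> gls_obj W K yhat yc \<le> gls_obj W K yhat y"
    and "\<forall>y\<in>carrier_vec n. C *\<^sub>v y = 0\<^sub>v nu \<and> gls_obj W K yhat y \<le> gls_obj W K yhat yc
      \<longrightarrow> y = yc"
proof -
  note decomposition = gls_obj_decomposition[OF W K C yhat yc _ _ \<mu> lagrange]
  have Wi: "sym_pos_def (mat_inv W) m"
    using W by (rule sym_pos_def_mat_inv)
  show "\<forall>y\<in>carrier_vec n. C *\<^sub>v y = 0\<^sub>v nu \<longrightarrow> gls_obj W K yhat yc \<le> gls_obj W K yhat y"
  proof (intro ballI impI)
    fix y
    assume y: "y \<in> carrier_vec n" "C *\<^sub>v y = 0\<^sub>v nu"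
    have "0 \<le> (K *\<^sub>v (y - yc)) \<bullet> (mat_inv W *\<^sub>v (K *\<^sub>v (y - yc)))"
      using K y yc by (intro sym_pos_def_nonneg[OF Wi]) simp
    then show "gls_obj W K yhat yc \<le> gls_obj W K yhat y"
      using decomposition[OF y] by simp
  qed
  show "\<forall>y\<in>carrier_vec n. C *\<^sub>v y = 0\<^sub>v nu \<and> gls_obj W K yhat y \<le> gls_obj W K yhat yc
      \<longrightarrow> y = yc"
  proof (intro ballI impI, elim conjE)
    fix y
    assume y: "y \<in> carrier_vec n" "C *\<^sub>v y = 0\<^sub>v nu"
      and le: "gls_obj W K yhat y \<le> gls_obj W K yhat yc"
    have d: "y - yc \<in> carrier_vec n"
      using y yc by simp
    have "\<not> 0 < (K *\<^sub>v (y - yc)) \<bullet> (mat_inv W *\<^sub>v (K *\<^sub>v (y - yc)))"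
      using decomposition[OF y] le by simp
    then have "K *\<^sub>v (y - yc) = 0\<^sub>v m"
      using Wi K d by (auto simp: sym_pos_def_def)
    then have "y - yc = 0\<^sub>v n"
      using K_inj d by blast
    show "y = yc"
    proof (rule eq_vecI)
      fix i
      assume i: "i < dim_vec yc"
      then have "(y - yc) $ i = 0"
        using \<open>y - yc = 0\<^sub>v n\<close> yc by simp
      then show "y $ i = yc $ i"
        using i y yc by simp
    qed (use y yc in simp)
  qed
qed

lemma gls_gram_matrices_sym_pos_def:
  assumes W: "sym_pos_def W m" and K: "K \<in> carrier_mat m n"
    and K_inj: "\<And>y. y \<in> carrier_vec n \<Longrightarrow> K *\<^sub>v y = 0\<^sub>v m \<Longrightarrow> y = 0\<^sub>v n"
    and C: "C \<in> carrier_mat nu n"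
    and C_inj: "\<And>z. z \<in> carrier_vec nu \<Longrightarrow> C\<^sup>T *\<^sub>v z = 0\<^sub>v n \<Longrightarrow> z = 0\<^sub>v nu"
  shows "sym_pos_def (K\<^sup>T * mat_inv W * K) n"
    and "sym_pos_def (C * mat_inv (K\<^sup>T * mat_inv W * K) * C\<^sup>T) nu"
proof -
  show Q: "sym_pos_def (K\<^sup>T * mat_inv W * K) n"
    using sym_pos_def_mat_inv[OF W] K K_inj by (rule sym_pos_def_congruence)
  show "sym_pos_def (C * mat_inv (K\<^sup>T * mat_inv W * K) * C\<^sup>T) nu"
    using sym_pos_def_congruence[OF sym_pos_def_mat_inv[OF Q], of "C\<^sup>T"] C C_inj by simp
qed

lemma constrained_gls_solution:
  assumes W: "sym_pos_def W m" and K: "K \<in> carrier_mat m n"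
    and K_inj: "\<And>y. y \<in> carrier_vec n \<Longrightarrow> K *\<^sub>v y = 0\<^sub>v m \<Longrightarrow> y = 0\<^sub>v n"
    and C: "C \<in> carrier_mat nu n"
    and C_inj: "\<And>z. z \<in> carrier_vec nu \<Longrightarrow> C\<^sup>T *\<^sub>v z = 0\<^sub>v n \<Longrightarrow> z = 0\<^sub>v nu"
    and yhat: "yhat \<in> carrier_vec m"
  shows
    "let Wi = mat_inv W;
         Wc = mat_inv (transpose_mat K * Wi * K);
         \<Omega> = Wi * K * Wc;
         M = 1\<^sub>m n - Wc * transpose_mat C * mat_inv (C * Wc * transpose_mat C) * C;
         \<Psi>T = M * transpose_mat \<Omega>;
         yc = \<Psi>T *\<^sub>v yhat
     in invertible_mat (transpose_mat K * Wi * K)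
      \<and> invertible_mat (C * Wc * transpose_mat C)
      \<and> \<Psi>T \<in> carrier_mat n m
      \<and> yc = M *\<^sub>v (transpose_mat \<Omega> *\<^sub>v yhat)
      \<and> yc \<in> carrier_vec n \<and> C *\<^sub>v yc = 0\<^sub>v nu
      \<and> (\<forall>y\<in>carrier_vec n. C *\<^sub>v y = 0\<^sub>v nu \<longrightarrow> gls_obj W K yhat yc \<le> gls_obj W K yhat y)
      \<and> (\<forall>y\<in>carrier_vec n. C *\<^sub>v y = 0\<^sub>v nu \<and> gls_obj W K yhat y \<le> gls_obj W K yhat yc
            \<longrightarrow> y = yc)"
proof -
  define Wi where "Wi = mat_inv W"
  define Wc where "Wc = mat_inv (K\<^sup>T * Wi * K)"
  define Si where "Si = mat_inv (C * Wc * C\<^sup>T)"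
  define M where "M = 1\<^sub>m n - Wc * C\<^sup>T * Si * C"
  have Q: "sym_pos_def (K\<^sup>T * Wi * K) n"
    unfolding Wi_def using W K K_inj C C_inj by (rule gls_gram_matrices_sym_pos_def(1))
  have S: "sym_pos_def (C * Wc * C\<^sup>T) nu"
    unfolding Wc_def Wi_def using W K K_inj C C_inj by (rule gls_gram_matrices_sym_pos_def(2))
  have "sym_pos_def Wi m"
    unfolding Wi_def using W by (rule sym_pos_def_mat_inv)
  moreover have "sym_pos_def Wc n"
    unfolding Wc_def using Q by (rule sym_pos_def_mat_inv)
  ultimately have Wi_carrier: "Wi \<in> carrier_mat m m" and Wi_sym: "Wi\<^sup>T = Wi"
    and Wc_carrier: "Wc \<in> carrier_mat n n" and Wc_sym: "Wc\<^sup>T = Wc"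
    by (simp_all add: sym_pos_def_def)
  have Wc_inv: "K\<^sup>T * Wi * K * Wc = 1\<^sub>m n"
    using Q mat_inv_right[OF _ sym_pos_def_invertible[OF Q]] by (simp add: sym_pos_def_def Wc_def)
  have Si_carrier: "Si \<in> carrier_mat nu nu" and Si_inv: "C * Wc * C\<^sup>T * Si = 1\<^sub>m nu"
    using S mat_inv_carrier[OF _ sym_pos_def_invertible[OF S]]
      mat_inv_right[OF _ sym_pos_def_invertible[OF S]]
    by (simp_all add: sym_pos_def_def Si_def)
  have Omega_T: "(Wi * K * Wc)\<^sup>T = Wc * K\<^sup>T * Wi"
    using K Wi_carrier Wc_carrier Wi_sym Wc_sym
    by (simp add: transpose_mult[of _ m n _ n] transpose_mult[of _ m m _ n])
  have Psi_T: "M * (Wi * K * Wc)\<^sup>T \<in> carrier_mat n m"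
    unfolding Omega_T M_def using K Wi_carrier Wc_carrier by (intro carrier_matI) auto
  define yc where "yc = M *\<^sub>v ((Wi * K * Wc)\<^sup>T *\<^sub>v yhat)"
  have yc_eq: "(M * (Wi * K * Wc)\<^sup>T) *\<^sub>v yhat = yc"
    unfolding yc_def M_def
    by (rule assoc_mult_mat_vec_dim) (use K C Wi_carrier Wc_carrier yhat in simp_all)
  have yc_carrier: "yc \<in> carrier_vec n"
    unfolding yc_def M_def by (intro carrier_vecI) (use Wc_carrier in simp)
  note lagrange = gls_lagrange_conditions[OF K Wi_carrier Wc_carrier Wc_inv C Si_carrier Si_inv yhat,
      folded Omega_T M_def, folded yc_def]
  from lagrange(2) obtain \<mu> where "\<mu> \<in> carrier_vec nu"
    and "K\<^sup>T *\<^sub>v (Wi *\<^sub>v (yhat - K *\<^sub>v yc)) = C\<^sup>T *\<^sub>v \<mu>"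
    by blast
  note minimizer =
    gls_lagrange_unique_minimizer[OF W K K_inj C yhat yc_carrier lagrange(1) this[unfolded Wi_def]]
  show ?thesis
    unfolding Let_def Wi_def[symmetric] Wc_def[symmetric] Si_def[symmetric] M_def[symmetric] yc_eq
    using sym_pos_def_invertible[OF Q] sym_pos_def_invertible[OF S] Psi_T yc_carrier lagrange(1)
      minimizer
    by (simp add: yc_def)
qed

theorem theorem1:
  fixes nu n :: nat and A :: "real mat" and Ls :: "real mat list" and ns :: "nat list"
    and yhat :: "real vec" and W :: "real mat"
  assumes "0 < nu" and "nu < n"
    and "A \<in> carrier_mat nu (n - nu)"
    and "length Ls \<ge> 2" and "length ns = length Ls"
    and "\<forall>j<length Ls. 1 \<le> ns ! j \<and> ns ! j \<le> n \<and> selection_mat (Ls ! j) (ns ! j) n"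
    and "\<forall>i<n. \<exists>j<length Ls. \<exists>r<ns ! j. row (Ls ! j) r = unit_vec n i"
    and "yhat \<in> carrier_vec (sum_list ns)"
    and "sym_pos_def W (sum_list ns)"
  shows
    "let m = sum_list ns;
         C = coherence_mat nu (n - nu) A;
         K = stack_rows n Ls;
         Wi = mat_inv W;
         Wc = mat_inv (transpose_mat K * Wi * K);
         \<Omega> = Wi * K * Wc;
         M = 1\<^sub>m n - Wc * transpose_mat C * mat_inv (C * Wc * transpose_mat C) * C;
         \<Psi>T = M * transpose_mat \<Omega>;
         yc = \<Psi>T *\<^sub>v yhat
     in invertible_mat (transpose_mat K * Wi * K)
      \<and> invertible_mat (C * Wc * transpose_mat C)
      \<and> \<Psi>T \<in> carrier_mat n m
      \<and> yc = M *\<^sub>v (transpose_mat \<Omega> *\<^sub>v yhat)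
      \<and> yc \<in> carrier_vec n \<and> C *\<^sub>v yc = 0\<^sub>v nu
      \<and> (\<forall>y\<in>carrier_vec n. C *\<^sub>v y = 0\<^sub>v nu \<longrightarrow> gls_obj W K yhat yc \<le> gls_obj W K yhat y)
      \<and> (\<forall>y\<in>carrier_vec n. C *\<^sub>v y = 0\<^sub>v nu \<and> gls_obj W K yhat y \<le> gls_obj W K yhat yc
            \<longrightarrow> y = yc)"
proof -
  \<comment> \<open>Not needed: 0 < nu, length Ls \<ge> 2, the bounds on ns ! j, and the row conditions
    of selection_mat beyond its dimensions.\<close>
  have blocks: "\<forall>j<length Ls. Ls ! j \<in> carrier_mat (ns ! j) n"
    using assms(6) by (simp add: selection_mat_def)
  have K: "stack_rows n Ls \<in> carrier_mat (sum_list ns) n"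
    using assms(5) blocks by (rule stack_rows_carrier)
  have K_inj: "y = 0\<^sub>v n"
    if "y \<in> carrier_vec n" and "stack_rows n Ls *\<^sub>v y = 0\<^sub>v (sum_list ns)" for y
    using assms(5) blocks assms(7) that by (rule stack_rows_kernel_trivial)
  have n_split: "nu + (n - nu) = n"
    using assms(2) by simp
  have C: "coherence_mat nu (n - nu) A \<in> carrier_mat nu n"
    using coherence_mat_carrier[of nu "n - nu" A] by (simp only: n_split)
  have C_inj: "z = 0\<^sub>v nu"
    if "z \<in> carrier_vec nu" and "(coherence_mat nu (n - nu) A)\<^sup>T *\<^sub>v z = 0\<^sub>v n" for z
    using coherence_mat_transpose_kernel_trivial[of z nu "n - nu" A] that by (simp only: n_split)
  show ?thesis
    using assms(9) K K_inj C C_inj assms(8) unfolding Let_def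
    by (rule constrained_gls_solution[unfolded Let_def])
qed

end
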